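(* Let $A\in\mathbb{R}^{m\times n}$, $A\ne0$, $b\in\mathbb{R}^m$ with $S_+\ne\emptyset$, $x_0\in\mathbb{R}^n_{++}$, and let $(x_k)$ be the iterates of entropic mirror descent with the Polyak-type stepsize, $$\alpha_k=\min\left\{\frac{f(x_k)}{\|\nabla f(x_k)\|^2_{x_k}},\ \frac{1.79}{\|\nabla f(x_k)\|_\infty}\right\},\qquad x_{k+1}=x_k\circ\exp(-\alpha_k\nabla f(x_k)),$$ with $f(x)=\frac12\|Ax-b\|_2^2$. Suppose $(x_k)$ converges to $z=\arg\min_{x\in S_+}D_h(x,x_0)$ and $z_{\min}>0$. Then for every $k\ge0$ $$D_h(z,x_{k+1})\le D_h(z,x_k)\left(1-\frac{-\lambda^+_{\min}\,z_{\min}\,W_0\!\left(-\exp\!\left(-1-\frac{D_h(z,x_k)}{z_{\min}}\right)\right)}{8\max_{j\le n}\|A_{:j}\|_2^2\,\big(\|z\|_1+D_h(z,x_k)\big)}\right),$$ and the same inequality holds with $D_h(z,x_k)$ replaced by $D_h(z,x_0)$ inside the fraction (a global linear rate). Consequently, asymptotically the contraction factor is $$1-\frac{\lambda^+_{\min}\,z_{\min}}{8\max_{j\le n}\|A_{:j}\|_2^2\,\|z\|_1}$$ (local linear rate).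
   Context: $S_+=\{x\in\mathbb{R}^n_+ : Ax=b\}$; $\mathbb{R}^n_{++}$ is the strictly positive orthant; $\circ$, $\exp$ act componentwise; $\nabla f(x)=A^\top(Ax-b)$; $\|v\|_x^2=\sum_i x_iv_i^2$; $z_{\min}=\min_i z_i$; $A_{:j}$ is the $j$-th column of $A$; $\lambda^+_{\min}$ is the smallest positive eigenvalue of $A^\top A$; $W_0$ is the principal branch of the Lambert $W$ function. $h(x)=\sum_i x_i(\log x_i-1)$ (with $0\log0=0$) and $D_h(x,y)=\sum_i\big(x_i\log\frac{x_i}{y_i}-x_i+y_i\big)$ for $x\in\mathbb{R}^n_+$, $y\in\mathbb{R}^n_{++}$. *)

theory Defs
  imports "HOL-Analysis.Analysis"
begin

definition lsq_f :: "real^'n^'m \<Rightarrow> real^'m \<Rightarrow> real^'n \<Rightarrow> real" where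
  "lsq_f A b x = (1/2) * (norm (A *v x - b))\<^sup>2"

definition lsq_grad :: "real^'n^'m \<Rightarrow> real^'m \<Rightarrow> real^'n \<Rightarrow> real^'n" where
  "lsq_grad A b x = transpose A *v (A *v x - b)"

definition local_norm_sq :: "real^'n \<Rightarrow> real^'n \<Rightarrow> real" where
  "local_norm_sq x v = (\<Sum>i\<in>UNIV. x$i * (v$i)\<^sup>2)"

definition inf_norm :: "real^'n \<Rightarrow> real" where
  "inf_norm v = Max {\<bar>v$i\<bar> | i. True}"

definition one_norm :: "real^'n \<Rightarrow> real" where
  "one_norm v = (\<Sum>i\<in>UNIV. \<bar>v$i\<bar>)"

definition vmin :: "real^'n \<Rightarrow> real" where
  "vmin z = Min {z$i | i. True}"

definition D_h :: "real^'n \<Rightarrow> real^'n \<Rightarrow> real" where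
  "D_h x y = (\<Sum>i\<in>UNIV. (if x$i = 0 then 0 else x$i * ln (x$i / y$i)) - x$i + y$i)"

definition S_plus :: "real^'n^'m \<Rightarrow> real^'m \<Rightarrow> (real^'n) set" where
  "S_plus A b = {x. (\<forall>i. 0 \<le> x$i) \<and> A *v x = b}"

definition polyak_step :: "real^'n^'m \<Rightarrow> real^'m \<Rightarrow> real^'n \<Rightarrow> real" where
  "polyak_step A b x = min (lsq_f A b x / local_norm_sq x (lsq_grad A b x))
                           ((179/100) / inf_norm (lsq_grad A b x))"

definition emd_update :: "real^'n^'m \<Rightarrow> real^'m \<Rightarrow> real^'n \<Rightarrow> real^'n" where
  "emd_update A b x = (\<chi> i. x$i * exp (- polyak_step A b x * lsq_grad A b x $ i))"

text \<open>Principal branch W_0 of the Lambert W function on [-1/e, \<infinity>).\<close>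
definition lambertW0 :: "real \<Rightarrow> real" where
  "lambertW0 y = (THE w. -1 \<le> w \<and> w * exp w = y)"

definition lambda_min_pos :: "real^'n^'m \<Rightarrow> real" where
  "lambda_min_pos A = Min {l. 0 < l \<and> (\<exists>v. v \<noteq> 0 \<and> (transpose A ** A) *v v = l *s v)}"

definition max_col_sq :: "real^'n^'m \<Rightarrow> real" where
  "max_col_sq A = Max {(norm (column j A))\<^sup>2 | j. True}"

definition rate :: "real^'n^'m \<Rightarrow> real^'n \<Rightarrow> real \<Rightarrow> real" where
  "rate A z d = 1 - (- lambda_min_pos A * vmin z * lambertW0 (- exp (-1 - d / vmin z)))
                    / (8 * max_col_sq A * (one_norm z + d))"

end

theory Submission
  imports Defs
begin

text \<open>
  Along the iteration the Bregman distance to z drops by at least alpha_k f(x_k):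
  expanding D_h(z, x_{k+1}) gives D_h(z, x_k) - 2 alpha_k f(x_k) + sum_i x_i (exp(-t_i) - 1 + t_i)
  with t_i = alpha_k grad f(x_k)_i, and |t_i| <= 1.79 bounds the last sum by
  alpha_k^2 ||grad f(x_k)||^2_{x_k} <= alpha_k f(x_k).
  Conversely alpha_k f(x_k) dominates a multiple of D_h(z, x_k). The vector ln z - ln x_k stays
  orthogonal to ker A (optimality of z plus the multiplicative form of the update), so the
  spectral gap lambda of A^T A yields 2 f(x_k) >= lambda m D_h(z, x_k) whenever m bounds the
  coordinates of x_k and z from below. Such an m comes from D_h(z, x_k) <= c through the Lambert
  function: z_i (t - 1 - ln t) <= c with t = x_i / z_i forces t >= -W_0(-exp(-1 - c / z_i)).
\<close>

section \<open>Elementary real inequalities\<close>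

lemma exp_179_le: "exp (179/100::real) \<le> 59941/10000"
proof -
  obtain t where t: "\<bar>t\<bar> \<le> \<bar>179/100::real\<bar>"
    "exp (179/100::real) = (\<Sum>m<10. ((179/100::real) ^ m) / fact m) + (exp t / fact 10) * (179/100) ^ 10"
    using Maclaurin_exp_le[of "179/100::real" 10] by blast
  have "exp t \<le> exp 2" using t(1) by simp
  also have "exp (2::real) = exp 1 * exp 1" by (simp flip: exp_add)
  also have "\<dots> \<le> 3 * 3" using exp_le by (intro mult_mono) auto
  finally have et: "exp t \<le> 9" by simp
  have "(\<Sum>m<10. ((179/100::real) ^ m) / fact m) \<le> 59894/10000"
    by (simp add: lessThan_nat_numeral fact_numeral power_divide)
  moreover have "(exp t / fact 10) * (179/100::real) ^ 10 \<le> 9 / fact 10 * (179/100) ^ 10"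
    using et by (intro mult_right_mono divide_right_mono) auto
  moreover have "9 / fact 10 * (179/100::real) ^ 10 \<le> 9/10000"
    by (simp add: fact_numeral power_divide)
  ultimately show ?thesis using t(2) by linarith
qed

text \<open>The stepsize constant 1.79 is just below the positive root (about 1.793) of
  \<open>exp s = 1 + s + s\<^sup>2\<close>.\<close>

lemma exp_le_one_plus_plus_square:
  assumes "0 \<le> s" "s \<le> 179/100"
  shows "exp (s::real) \<le> 1 + s + s\<^sup>2"
proof (cases "s \<le> 1")
  case True
  then show ?thesis using exp_bound assms by blast
next
  case False
  define h where "h = (\<lambda>s::real. (1 + s + s\<^sup>2) * exp (-s))"
  have "h (179/100) \<le> h s"
  proof (rule DERIV_nonpos_imp_decreasing_open[of s "179/100" h])
    show "s \<le> 179/100" by fact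
    fix y assume y: "s < y" "y < 179/100"
    have "DERIV h y :> (y - y\<^sup>2) * exp (-y)"
      unfolding h_def by (auto intro!: derivative_eq_intros simp: algebra_simps power2_eq_square)
    moreover have "(y - y\<^sup>2) * exp (-y) \<le> 0"
      using y False by (intro mult_nonpos_nonneg) (auto simp: power2_eq_square)
    ultimately show "\<exists>d. DERIV h y :> d \<and> d \<le> 0" by blast
  next
    show "continuous_on {s..179/100} h" unfolding h_def by (intro continuous_intros)
  qed
  moreover have "1 \<le> h (179/100)"
  proof -
    have "exp (179/100::real) \<le> 1 + 179/100 + (179/100)\<^sup>2"
      using exp_179_le by (simp add: power2_eq_square)
    moreover have "exp (- (179/100::real)) * exp (179/100) = 1" by (simp flip: exp_add)
    ultimately show ?thesis unfolding h_def
      by (metis exp_gt_zero mult_le_cancel_left_pos mult.commute)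
  qed
  ultimately have "1 * exp s \<le> (1 + s + s\<^sup>2) * exp (-s) * exp s"
    unfolding h_def by (intro mult_right_mono) auto
  also have "\<dots> = 1 + s + s\<^sup>2" by (simp flip: exp_add)
  finally show ?thesis by simp
qed

lemma exp_minus_sub_le_square:
  assumes "-(179/100) \<le> t"
  shows "exp (-t) - 1 + t \<le> (t::real)\<^sup>2"
proof (cases "0 \<le> t")
  case True
  obtain u where u: "exp (-t) = (\<Sum>m<3. ((-t) ^ m) / fact m) + (exp u / fact 3) * (-t) ^ 3"
    using Maclaurin_exp_le[of "-t" 3] by blast
  have "(exp u / fact 3) * (-t) ^ 3 \<le> 0"
    using True by (intro mult_nonneg_nonpos) auto
  then have "exp (-t) \<le> 1 - t + t\<^sup>2/2"
    using u by (simp add: lessThan_nat_numeral fact_numeral power2_eq_square)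
  then show ?thesis using zero_le_power2[of t] by linarith
next
  case False
  then show ?thesis using exp_le_one_plus_plus_square[of "-t"] assms by simp
qed

lemma entropy_term_nonneg:
  assumes "0 < a" "0 < y"
  shows "0 \<le> a * ln (a / y) - a + (y::real)"
proof -
  have "ln (y / a) \<le> y / a - 1" using assms by (intro ln_le_minus_one) auto
  then have "a * (1 - y / a) \<le> a * ln (a / y)"
    using assms by (intro mult_left_mono) (auto simp: ln_div)
  moreover have "a * (1 - y / a) = a - y" using assms by (simp add: field_simps)
  ultimately show ?thesis by linarith
qed

lemma entropy_term_le_mult_ln_diff:
  assumes "0 < a" "0 < y"
  shows "a * ln (a / y) - a + (y::real) \<le> (ln a - ln y) * (a - y)"
  using entropy_term_nonneg[of y a] assms by (simp add: ln_div algebra_simps)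

lemma le_entropy_term:
  assumes "0 < a" "0 < y"
  shows "y \<le> 2 * (a * ln (a / y) - a + y) + 2 * (a::real)"
proof -
  have "ln (y / a / 2) \<le> y / a / 2 - 1" using assms by (intro ln_le_minus_one) auto
  then have "ln (y / a) \<le> y / (2 * a)"
    using ln_div[of "y/a" 2] ln_2_less_1 assms by simp
  then have "a * ln (y / a) \<le> a * (y / (2 * a))" using assms by (intro mult_left_mono) auto
  then show ?thesis using assms by (simp add: ln_div algebra_simps)
qed

lemma ln_diff_square_le:
  assumes "0 < m" "m \<le> a" "m \<le> b"
  shows "(ln a - ln b)\<^sup>2 \<le> (ln a - ln b) * (a - b) / (m::real)"
proof -
  have le: "(ln p - ln q)\<^sup>2 \<le> (ln p - ln q) * (p - q) / m" if "m \<le> q" "q \<le> p" for p q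
  proof -
    have "0 \<le> ln p - ln q" using that assms by simp
    moreover have "ln p - ln q \<le> (p - q) / m"
    proof -
      have "ln p - ln q \<le> (p - q) / q" using ln_diff_le[of p q] that assms by simp
      also have "\<dots> \<le> (p - q) / m" using that assms by (intro divide_left_mono) auto
      finally show ?thesis .
    qed
    ultimately show ?thesis
      using mult_left_mono[of "ln p - ln q" "(p - q) / m" "ln p - ln q"] by (simp add: power2_eq_square)
  qed
  show ?thesis
    using le[of b a] le[of a b] assms by (cases "b \<le> a") (auto simp: power2_commute algebra_simps)
qed

section \<open>The principal branch of the Lambert function\<close>

lemma mult_exp_strict_mono:
  assumes "-1 \<le> a" "a < b"
  shows "a * exp a < b * exp (b::real)"
proof (rule DERIV_pos_imp_increasing_open[of a b "\<lambda>w. w * exp w"])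
  fix y assume y: "a < y" "y < b"
  have "DERIV (\<lambda>w. w * exp w) y :> (1 + y) * exp y"
    by (auto intro!: derivative_eq_intros simp: algebra_simps)
  moreover have "(1 + y) * exp y > 0" using y assms by auto
  ultimately show "\<exists>d. DERIV (\<lambda>w. w * exp w) y :> d \<and> 0 < d" by blast
qed (use assms in \<open>auto intro!: continuous_intros\<close>)

lemma mult_exp_le_mult_exp_iff:
  assumes "-1 \<le> a" "-1 \<le> b"
  shows "a * exp a \<le> b * exp b \<longleftrightarrow> a \<le> (b::real)"
  using mult_exp_strict_mono[of a b] mult_exp_strict_mono[of b a] assms
  by (cases a b rule: linorder_cases) auto

lemma lambertW0:
  assumes "-exp(-1) \<le> y" "y < 0"
  shows "-1 \<le> lambertW0 y" "lambertW0 y * exp (lambertW0 y) = y" "lambertW0 y < 0"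
proof -
  have "\<exists>w. -1 \<le> w \<and> w \<le> 0 \<and> w * exp w = y"
    by (rule IVT') (use assms in \<open>auto intro!: continuous_intros\<close>)
  then obtain w where w: "-1 \<le> w" "w \<le> 0" "w * exp w = y" by blast
  have "lambertW0 y = w" unfolding lambertW0_def
  proof (rule the_equality)
    fix v assume "-1 \<le> v \<and> v * exp v = y"
    then show "v = w" using mult_exp_le_mult_exp_iff[of v w] mult_exp_le_mult_exp_iff[of w v] w by auto
  qed (use w in auto)
  moreover have "w \<noteq> 0" using w assms by auto
  ultimately show "-1 \<le> lambertW0 y" "lambertW0 y * exp (lambertW0 y) = y" "lambertW0 y < 0"
    using w by auto
qed

lemma minus_lambertW0_le:
  assumes "0 \<le> c" "0 < t" "t - 1 - ln t \<le> c"
  shows "- lambertW0 (- exp (-1 - c)) \<le> t"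
proof (rule ccontr)
  define \<tau> where "\<tau> = - lambertW0 (- exp (-1 - c))"
  have W: "-1 \<le> -\<tau>" "-\<tau> * exp (-\<tau>) = - exp (-1 - c)" "-\<tau> < 0"
    unfolding \<tau>_def using lambertW0[of "- exp (-1 - c)"] assms(1) by auto
  then have "ln (\<tau> * exp (-\<tau>)) = -1 - c" by simp
  then have ln\<tau>: "ln \<tau> - \<tau> = -1 - c" using W by (simp add: ln_mult)
  assume "\<not> \<tau> \<le> t"
  then have "ln t - ln \<tau> < (t - \<tau>) / \<tau>" using ln_diff_less[of t \<tau>] assms by auto
  also have "(t - \<tau>) / \<tau> \<le> t - \<tau>"
    using \<open>\<not> \<tau> \<le> t\<close> W by (simp add: divide_le_eq mult_le_cancel_left_neg)
  finally show False using assms ln\<tau> by linarith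
qed

lemma lambertW0_tendsto_minus_one:
  assumes Y: "Y \<longlonglongrightarrow> -exp(-1)" and bounds: "\<And>k. -exp(-1) \<le> Y k \<and> Y k < 0"
  shows "(\<lambda>k. lambertW0 (Y k)) \<longlonglongrightarrow> -1"
proof (rule LIMSEQ_I)
  fix r :: real assume r: "0 < r"
  define w where "w = -1 + min (r/2) (1/2)"
  have w: "-1 < w" "w < 0" "w < -1 + r" unfolding w_def using r by auto
  then have "-exp(-1) < w * exp w" using mult_exp_strict_mono[of "-1" w] by auto
  then obtain N where N: "\<And>k. k \<ge> N \<Longrightarrow> Y k < w * exp w"
    using order_tendstoD(2)[OF Y] by (auto simp: eventually_sequentially)
  have "norm (lambertW0 (Y k) - -1) < r" if "N \<le> k" for k
  proof -
    note W = lambertW0[OF bounds[THEN conjunct1] bounds[THEN conjunct2], of k]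
    have "lambertW0 (Y k) < w"
      using mult_exp_le_mult_exp_iff[of w "lambertW0 (Y k)"] N[OF that] W w by auto
    then show ?thesis using W w by auto
  qed
  then show "\<exists>N. \<forall>k\<ge>N. norm (lambertW0 (Y k) - -1) < r" by blast
qed

section \<open>The spectral gap of the Gram matrix\<close>

definition null_space :: "real^'n^'m \<Rightarrow> (real^'n) set" where
  "null_space A = {q. A *v q = 0}"

definition gram_pos_eigenvalues :: "real^'n^'m \<Rightarrow> real set" where
  "gram_pos_eigenvalues A = {l. 0 < l \<and> (\<exists>v. v \<noteq> 0 \<and> (transpose A ** A) *v v = l *s v)}"

lemma subspace_null_space: "subspace (null_space A)"
  by (auto simp: subspace_def null_space_def matrix_vector_right_distrib matrix_vector_mult_scaleR)

lemma mem_orthogonal_comp_null_space: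
  "p \<in> (null_space A)\<^sup>\<bottom> \<longleftrightarrow> (\<forall>q. A *v q = 0 \<longrightarrow> p \<bullet> q = 0)"
  by (auto simp: orthogonal_comp_def orthogonal_def null_space_def inner_commute)

lemma inner_transpose_mult_vec: "(transpose A *v r) \<bullet> q = r \<bullet> (A *v (q::real^'n))"
  for A :: "real^'n^'m"
  by (simp add: inner_vec_def matrix_vector_mult_def transpose_def sum_distrib_left
      sum_distrib_right mult.assoc mult.left_commute) (rule sum.swap)

lemma inner_gram_mult_vec: "((transpose A ** A) *v v) \<bullet> w = (A *v v) \<bullet> (A *v (w::real^'n))"
  for A :: "real^'n^'m"
  by (simp only: matrix_vector_mul_assoc[symmetric] inner_transpose_mult_vec)

lemma transpose_mult_vec_in_orthogonal_comp: "transpose A *v y \<in> (null_space A)\<^sup>\<bottom>"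
  unfolding mem_orthogonal_comp_null_space inner_transpose_mult_vec by simp

lemma row_in_orthogonal_comp: "A $ i \<in> (null_space A)\<^sup>\<bottom>"
  by (auto simp: mem_orthogonal_comp_null_space vec_eq_iff matrix_vector_mult_def inner_vec_def)

lemma null_space_decomp:
  obtains p q where "d = p + q" "q \<in> null_space A" "p \<in> (null_space A)\<^sup>\<bottom>"
proof -
  obtain q p where "q \<in> span (null_space A)" "\<And>w. w \<in> span (null_space A) \<Longrightarrow> orthogonal p w"
    "d = q + p"
    using orthogonal_subspace_decomp_exists by blast
  moreover have "span (null_space A) = null_space A" by (simp add: subspace_null_space)
  ultimately show ?thesis
    using that[of p q] by (auto simp: orthogonal_comp_def orthogonal_commute add.commute)
qed

lemma linear_coeff_eq_0_if_quadratic_nonneg: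
  assumes "\<And>t::real. 0 \<le> a * t + b * t\<^sup>2"
  shows "a = 0"
proof (rule ccontr)
  assume a: "a \<noteq> 0"
  define s where "s = 1 / (\<bar>b\<bar> + 1)"
  have s: "0 < s" "b * s < 1" unfolding s_def by (auto simp: field_simps)
  have "0 \<le> a * (- a * s) + b * (- a * s)\<^sup>2" by (rule assms)
  also have "\<dots> = a\<^sup>2 * s * (b * s - 1)" by (simp add: power2_eq_square algebra_simps)
  also have "\<dots> < 0" using a s by (intro mult_pos_neg) auto
  finally show False by simp
qed

lemma gram_eigenvectors_orthogonal:
  fixes A :: "real^'n^'m"
  assumes "l1 \<noteq> l2" "(transpose A ** A) *v v1 = l1 *s v1" "(transpose A ** A) *v v2 = l2 *s v2"
  shows "v1 \<bullet> v2 = 0"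
proof -
  have "l1 * (v1 \<bullet> v2) = (A *v v1) \<bullet> (A *v v2)" "l2 * (v2 \<bullet> v1) = (A *v v2) \<bullet> (A *v v1)"
    using inner_gram_mult_vec[of A v1 v2] inner_gram_mult_vec[of A v2 v1] assms(2,3)
    by (simp_all add: scalar_mult_eq_scaleR)
  then have "(l1 - l2) * (v1 \<bullet> v2) = 0" by (simp add: inner_commute algebra_simps)
  then show ?thesis using assms(1) by simp
qed

lemma finite_gram_pos_eigenvalues: "finite (gram_pos_eigenvalues (A::real^'n^'m))"
proof (rule ccontr)
  assume "infinite (gram_pos_eigenvalues A)"
  then obtain F where F: "finite F" "card F = Suc DIM(real^'n)" "F \<subseteq> gram_pos_eigenvalues A"
    using infinite_arbitrarily_large by blast
  define ev where "ev l = (SOME v::real^'n. v \<noteq> 0 \<and> (transpose A ** A) *v v = l *s v)" for l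
  have ev: "ev l \<noteq> 0 \<and> (transpose A ** A) *v ev l = l *s ev l" if "l \<in> F" for l
    unfolding ev_def by (rule someI_ex) (use that F(3) in \<open>auto simp: gram_pos_eigenvalues_def\<close>)
  have orth: "ev l1 \<bullet> ev l2 = 0" if "l1 \<in> F" "l2 \<in> F" "l1 \<noteq> l2" for l1 l2
    using gram_eigenvectors_orthogonal ev that by blast
  have "inj_on ev F"
    by (rule inj_onI) (use orth ev in force)
  moreover have "independent (ev ` F)"
    by (rule pairwise_orthogonal_independent)
       (use orth ev in \<open>auto simp: pairwise_def orthogonal_def\<close>)
  ultimately have "card F \<le> DIM(real^'n)"
    using independent_bound card_image by metis
  then show False using F(2) by simp
qed

lemma lambda_min_pos_eq_Min: "lambda_min_pos A = Min (gram_pos_eigenvalues A)"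
  unfolding lambda_min_pos_def gram_pos_eigenvalues_def ..

text \<open>A minimiser of the Rayleigh quotient on the invariant subspace \<open>(ker A)\<^sup>\<bottom>\<close> is an
  eigenvector: otherwise moving it along the residual \<open>e = A\<^sup>TA p - \<mu> p \<in> (ker A)\<^sup>\<bottom>\<close>
  would decrease the quotient to first order.\<close>

lemma min_rayleigh_is_gram_eigenvector:
  fixes A :: "real^'n^'m"
  assumes p: "p \<in> (null_space A)\<^sup>\<bottom>" "norm p = 1"
    and min: "\<And>v. v \<in> (null_space A)\<^sup>\<bottom> \<Longrightarrow> (norm (A *v p))\<^sup>2 * (norm v)\<^sup>2 \<le> (norm (A *v v))\<^sup>2"
  shows "(transpose A ** A) *v p = (norm (A *v p))\<^sup>2 *s p"
proof -
  define \<mu> where "\<mu> = (norm (A *v p))\<^sup>2"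
  define e where "e = (transpose A ** A) *v p - \<mu> *s p"
  have "e = transpose A *v (A *v p) - \<mu> *\<^sub>R p"
    unfolding e_def by (simp add: matrix_vector_mul_assoc scalar_mult_eq_scaleR)
  then have e: "e \<in> (null_space A)\<^sup>\<bottom>"
    using p(1) transpose_mult_vec_in_orthogonal_comp subspace_orthogonal_comp
    by (metis subspace_diff subspace_scale)
  have Ape: "(A *v p) \<bullet> (A *v e) = e \<bullet> e + \<mu> * (p \<bullet> e)"
    using inner_gram_mult_vec[of A p e]
    by (simp add: e_def inner_diff_left scalar_mult_eq_scaleR)
  have "0 \<le> (2 * (e \<bullet> e)) * t + ((norm (A *v e))\<^sup>2 - \<mu> * (e \<bullet> e)) * t\<^sup>2" for t
  proof -
    have "p + t *\<^sub>R e \<in> (null_space A)\<^sup>\<bottom>"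
      using p(1) e subspace_orthogonal_comp by (metis subspace_add subspace_scale)
    then have "\<mu> * (norm (p + t *\<^sub>R e))\<^sup>2 \<le> (norm (A *v (p + t *\<^sub>R e)))\<^sup>2"
      using min unfolding \<mu>_def by blast
    moreover have "(norm (p + t *\<^sub>R e))\<^sup>2 = 1 + 2 * t * (p \<bullet> e) + t\<^sup>2 * (e \<bullet> e)"
      using norm_eq_1[THEN iffD1, OF p(2)] unfolding power2_norm_eq_inner
      by (simp add: inner_add_left inner_add_right inner_commute algebra_simps power2_eq_square)
    moreover have "(norm (A *v (p + t *\<^sub>R e)))\<^sup>2
        = \<mu> + 2 * t * ((A *v p) \<bullet> (A *v e)) + t\<^sup>2 * (norm (A *v e))\<^sup>2"
      unfolding \<mu>_def power2_norm_eq_inner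
      by (simp add: matrix_vector_right_distrib matrix_vector_mult_scaleR inner_add_left
          inner_add_right inner_commute algebra_simps power2_eq_square)
    ultimately show ?thesis unfolding Ape by (simp add: algebra_simps)
  qed
  then have "e = 0" using linear_coeff_eq_0_if_quadratic_nonneg by fastforce
  then show ?thesis unfolding e_def \<mu>_def by simp
qed

lemma rayleigh_bound_on_orthogonal_comp_null_space:
  fixes A :: "real^'n^'m"
  assumes "A \<noteq> 0"
  obtains \<mu> where "\<mu> \<in> gram_pos_eigenvalues A"
    "\<And>v. v \<in> (null_space A)\<^sup>\<bottom> \<Longrightarrow> \<mu> * (norm v)\<^sup>2 \<le> (norm (A *v v))\<^sup>2"
proof -
  define K where "K = (null_space A)\<^sup>\<bottom> \<inter> sphere 0 1"
  have compact: "compact K"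
    unfolding K_def by (intro closed_Int_compact closed_subspace subspace_orthogonal_comp compact_sphere)
  obtain i where "A $ i \<noteq> 0" using assms by (auto simp: vec_eq_iff)
  then have "(1 / norm (A $ i)) *\<^sub>R A $ i \<in> K"
    unfolding K_def using row_in_orthogonal_comp[of A i]
    by (simp add: subspace_scale[OF subspace_orthogonal_comp])
  then have nonempty: "K \<noteq> {}" by blast
  have "continuous_on K (\<lambda>v. (norm (A *v v))\<^sup>2)"
    by (intro continuous_intros matrix_vector_mult_linear_continuous_on)
  from continuous_attains_inf[OF compact nonempty this]
  obtain p where p: "p \<in> K" "\<And>v. v \<in> K \<Longrightarrow> (norm (A *v p))\<^sup>2 \<le> (norm (A *v v))\<^sup>2"
    by blast
  define \<mu> where "\<mu> = (norm (A *v p))\<^sup>2"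
  have pK: "p \<in> (null_space A)\<^sup>\<bottom>" "norm p = 1" using p(1) by (auto simp: K_def)
  have bound: "\<mu> * (norm v)\<^sup>2 \<le> (norm (A *v v))\<^sup>2" if v: "v \<in> (null_space A)\<^sup>\<bottom>" for v
  proof (cases "v = 0")
    case False
    have "(1 / norm v) *\<^sub>R v \<in> K"
      unfolding K_def using v False by (simp add: subspace_scale[OF subspace_orthogonal_comp])
    then have "\<mu> \<le> (norm (A *v ((1 / norm v) *\<^sub>R v)))\<^sup>2" unfolding \<mu>_def by (rule p(2))
    also have "\<dots> = (norm (A *v v))\<^sup>2 / (norm v)\<^sup>2"
      by (simp add: matrix_vector_mult_scaleR power_divide)
    finally show ?thesis using False by (simp add: field_simps)
  qed simp
  have "\<mu> \<noteq> 0"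
  proof
    assume "\<mu> = 0"
    then have "p \<bullet> p = 0" using pK(1) by (simp add: \<mu>_def mem_orthogonal_comp_null_space)
    then show False using pK(2) by simp
  qed
  moreover have "(transpose A ** A) *v p = \<mu> *s p"
    using min_rayleigh_is_gram_eigenvector[OF pK] bound unfolding \<mu>_def by blast
  ultimately have "\<mu> \<in> gram_pos_eigenvalues A"
    using pK(2) by (auto simp: gram_pos_eigenvalues_def \<mu>_def intro!: exI[of _ p])
  then show ?thesis using that bound by blast
qed

lemma lambda_min_pos_pos:
  assumes "(A::real^'n^'m) \<noteq> 0"
  shows "0 < lambda_min_pos A"
proof -
  obtain \<mu> where "\<mu> \<in> gram_pos_eigenvalues A"
    using rayleigh_bound_on_orthogonal_comp_null_space[OF assms] by blast
  then have "Min (gram_pos_eigenvalues A) \<in> gram_pos_eigenvalues A"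
    using finite_gram_pos_eigenvalues by (intro Min_in) auto
  then show ?thesis by (simp add: lambda_min_pos_eq_Min gram_pos_eigenvalues_def)
qed

lemma lambda_min_pos_le_rayleigh:
  fixes A :: "real^'n^'m"
  assumes "A \<noteq> 0" "v \<in> (null_space A)\<^sup>\<bottom>"
  shows "lambda_min_pos A * (norm v)\<^sup>2 \<le> (norm (A *v v))\<^sup>2"
proof -
  obtain \<mu> where \<mu>: "\<mu> \<in> gram_pos_eigenvalues A" "\<mu> * (norm v)\<^sup>2 \<le> (norm (A *v v))\<^sup>2"
    using rayleigh_bound_on_orthogonal_comp_null_space[OF assms(1)] assms(2) by metis
  have "lambda_min_pos A \<le> \<mu>"
    unfolding lambda_min_pos_eq_Min using finite_gram_pos_eigenvalues \<mu>(1) by (rule Min_le)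
  then show ?thesis using \<mu>(2) by (meson mult_right_mono order_trans zero_le_power2)
qed

text \<open>Only the component of \<open>d\<close> orthogonal to \<open>ker A\<close> matters on both sides, and on it
  Cauchy-Schwarz and the spectral gap combine.\<close>

lemma lambda_min_pos_mult_inner_square_le:
  fixes A :: "real^'n^'m"
  assumes "A \<noteq> 0" "u \<in> (null_space A)\<^sup>\<bottom>"
  shows "lambda_min_pos A * (u \<bullet> d)\<^sup>2 \<le> (u \<bullet> u) * (norm (A *v d))\<^sup>2"
proof -
  obtain p q where pq: "d = p + q" "q \<in> null_space A" "p \<in> (null_space A)\<^sup>\<bottom>"
    using null_space_decomp by blast
  have ud: "u \<bullet> d = u \<bullet> p" and Ad: "A *v d = A *v p"
    using pq(1) pq(2)[unfolded null_space_def] assms(2)[unfolded mem_orthogonal_comp_null_space]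
    by (auto simp: inner_add_right matrix_vector_right_distrib)
  have "lambda_min_pos A * (u \<bullet> p)\<^sup>2 \<le> lambda_min_pos A * ((u \<bullet> u) * (norm p)\<^sup>2)"
    using Cauchy_Schwarz_ineq[of u p] lambda_min_pos_pos[OF assms(1)]
    by (simp add: power2_norm_eq_inner)
  also have "\<dots> \<le> (u \<bullet> u) * (norm (A *v p))\<^sup>2"
    using mult_left_mono[OF lambda_min_pos_le_rayleigh[OF assms(1) pq(3)], of "u \<bullet> u"]
    by (simp add: mult.left_commute)
  finally show ?thesis unfolding ud Ad .
qed

lemma finite_range_nth: "finite {f i | i::'n::finite. True}"
  by (simp add: full_SetCompr_eq)

lemma abs_nth_le_inf_norm: "\<bar>v$j\<bar> \<le> inf_norm v"
  unfolding inf_norm_def by (rule Max_ge[OF finite_range_nth]) auto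

lemma inf_norm_attained: "\<exists>j. inf_norm v = \<bar>v$j\<bar>"
proof -
  have "inf_norm v \<in> {\<bar>v$i\<bar> | i. True}"
    unfolding inf_norm_def by (rule Max_in[OF finite_range_nth]) auto
  then show ?thesis by auto
qed

lemma inf_norm_nonneg: "0 \<le> inf_norm v"
  using abs_nth_le_inf_norm[of v] abs_ge_zero order_trans by blast

lemma vmin_le_nth: "vmin z \<le> z$i"
  unfolding vmin_def by (rule Min_le[OF finite_range_nth]) auto

lemma vmin_pos_imp_pos: "0 < vmin z \<Longrightarrow> 0 < z$i"
  using vmin_le_nth[of z i] by linarith

lemma one_norm_pos: "(\<And>i. 0 < z$i) \<Longrightarrow> 0 < one_norm z"
  unfolding one_norm_def by (intro sum_pos) (simp_all add: abs_of_pos)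

lemma norm_column_sq_le: "(norm (column j A))\<^sup>2 \<le> max_col_sq A"
  unfolding max_col_sq_def by (rule Max_ge[OF finite_range_nth]) auto

lemma norm_column_le: "norm (column j A) \<le> sqrt (max_col_sq A)"
  using norm_column_sq_le[of j A] by (simp add: real_le_rsqrt)

lemma max_col_sq_pos:
  assumes "(A::real^'n^'m) \<noteq> 0"
  shows "0 < max_col_sq A"
proof -
  obtain i j where "A$i$j \<noteq> 0" using assms by (auto simp: vec_eq_iff)
  then have "column j A \<noteq> 0" by (auto simp: column_def vec_eq_iff)
  then have "0 < (norm (column j A))\<^sup>2" by simp
  then show ?thesis using norm_column_sq_le[of j A] by linarith
qed

lemma abs_transpose_mult_vec_le: "\<bar>(transpose A *v r) $ j\<bar> \<le> sqrt (max_col_sq A) * norm (r::real^'m)"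
  for A :: "real^'n^'m"
proof -
  have "(transpose A *v r) $ j = column j A \<bullet> r"
    by (simp add: matrix_vector_mult_def transpose_def column_def inner_vec_def mult.commute)
  then have "\<bar>(transpose A *v r) $ j\<bar> \<le> norm (column j A) * norm r"
    by (simp add: Cauchy_Schwarz_ineq2)
  then show ?thesis using norm_column_le[of j A] by (meson mult_right_mono norm_ge_zero order_trans)
qed

lemma norm_mult_vec_le: "norm (A *v v) \<le> sqrt (max_col_sq A) * one_norm v"
  for A :: "real^'n^'m"
proof -
  have "norm (A *v v) = norm (\<Sum>j\<in>UNIV. v$j *\<^sub>R column j A)"
    by (simp add: matrix_mult_sum scalar_mult_eq_scaleR)
  also have "\<dots> \<le> (\<Sum>j\<in>UNIV. norm (v$j *\<^sub>R column j A))"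
    by (rule norm_sum)
  also have "\<dots> \<le> (\<Sum>j\<in>UNIV. sqrt (max_col_sq A) * \<bar>v$j\<bar>)"
    by (rule sum_mono) (simp add: norm_column_le mult_left_mono mult.commute[of _ "\<bar>_\<bar>"])
  finally show ?thesis by (simp add: one_norm_def sum_distrib_left)
qed

lemma local_norm_sq_nonneg: "(\<And>i. 0 \<le> x$i) \<Longrightarrow> 0 \<le> local_norm_sq x v"
  unfolding local_norm_sq_def by (intro sum_nonneg mult_nonneg_nonneg) auto

lemma local_norm_sq_le:
  assumes "\<And>i. 0 \<le> x$i"
  shows "local_norm_sq x v \<le> (\<Sum>i\<in>UNIV. x$i) * (inf_norm v)\<^sup>2"
proof -
  have "(v$i)\<^sup>2 \<le> (inf_norm v)\<^sup>2" for i
    using abs_nth_le_inf_norm[of v i] by (simp add: abs_le_square_iff[symmetric] inf_norm_nonneg)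
  then show ?thesis
    unfolding local_norm_sq_def sum_distrib_right by (intro sum_mono mult_left_mono assms)
qed

section \<open>The Bregman divergence of the entropy\<close>

lemma D_h_pos_eq:
  assumes "\<And>i. 0 < z$i"
  shows "D_h z y = (\<Sum>i\<in>UNIV. z$i * ln (z$i / y$i) - z$i + y$i)"
  unfolding D_h_def using assms by (intro sum.cong) (auto simp: less_imp_neq[symmetric])

lemma D_h_nonneg:
  assumes "\<And>i. 0 < z$i" "\<And>i. 0 < y$i"
  shows "0 \<le> D_h z y"
  unfolding D_h_pos_eq[OF assms(1)] by (intro sum_nonneg entropy_term_nonneg assms)

lemma D_h_le_inner_ln_diff:
  assumes "\<And>i. 0 < z$i" "\<And>i. 0 < y$i"
  shows "D_h z y \<le> (\<chi> i. ln (z$i) - ln (y$i)) \<bullet> (z - y)"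
  unfolding D_h_pos_eq[OF assms(1)] inner_vec_def
  by (auto intro!: sum_mono entropy_term_le_mult_ln_diff assms)

lemma sum_le_D_h:
  assumes "\<And>i. 0 < z$i" "\<And>i. 0 < y$i"
  shows "(\<Sum>i\<in>UNIV. y$i) \<le> 2 * (D_h z y + one_norm z)"
proof -
  have "(\<Sum>i\<in>UNIV. y$i) \<le> (\<Sum>i\<in>UNIV. 2 * (z$i * ln (z$i / y$i) - z$i + y$i) + 2 * z$i)"
    by (intro sum_mono le_entropy_term assms)
  also have "\<dots> = 2 * (D_h z y + one_norm z)"
    using assms(1) unfolding D_h_pos_eq[OF assms(1)] one_norm_def
    by (simp only: abs_of_pos sum.distrib sum_distrib_left[symmetric] distrib_left)
  finally show ?thesis .
qed

lemma D_h_tendsto_0: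
  assumes "\<And>i. 0 < z$i" "y \<longlonglongrightarrow> z"
  shows "(\<lambda>k. D_h z (y k)) \<longlonglongrightarrow> 0"
proof -
  have "(\<lambda>k. \<Sum>i\<in>UNIV. z$i * ln (z$i / y k $ i) - z$i + y k $ i)
      \<longlonglongrightarrow> (\<Sum>i\<in>UNIV. z$i * ln (z$i / z$i) - z$i + z$i)"
    using assms by (intro tendsto_intros) (auto simp: less_imp_neq[symmetric])
  then show ?thesis using assms(1) by (simp add: D_h_pos_eq less_imp_neq[symmetric])
qed

text \<open>The coordinate floor enforced by \<open>D_h z y \<le> c\<close>; it is the numerator of \<open>rate A z c\<close>.\<close>

definition entropy_floor :: "real^'n \<Rightarrow> real \<Rightarrow> real" where
  "entropy_floor z c = vmin z * - lambertW0 (- exp (-1 - c / vmin z))"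

lemma entropy_floor_pos_le_vmin:
  assumes "0 < vmin z" "0 \<le> c"
  shows "0 < entropy_floor z c" "entropy_floor z c \<le> vmin z"
proof -
  define w where "w = - lambertW0 (- exp (-1 - c / vmin z))"
  have "0 < w" "w \<le> 1"
    unfolding w_def using lambertW0[of "- exp (-1 - c / vmin z)"] assms by (auto simp: divide_nonneg_pos)
  moreover have "entropy_floor z c = vmin z * w" unfolding entropy_floor_def w_def ..
  ultimately show "0 < entropy_floor z c" "entropy_floor z c \<le> vmin z"
    using assms(1) by (simp_all add: mult_left_le)
qed

lemma entropy_floor_le_nth:
  assumes z: "0 < vmin z" and y: "\<And>i. 0 < y$i" and c: "D_h z y \<le> c"
  shows "entropy_floor z c \<le> y$i"
proof -
  have zpos: "\<And>i. 0 < z$i" using z by (rule vmin_pos_imp_pos)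
  have D0: "0 \<le> D_h z y" using D_h_nonneg zpos y .
  define t where "t = y$i / z$i"
  have t0: "0 < t" unfolding t_def using y zpos by simp
  have "z$i * (t - 1 - ln t) = z$i * ln (z$i / y$i) - z$i + y$i"
    unfolding t_def using y[of i] zpos[of i] by (simp add: ln_div algebra_simps)
  also have "\<dots> \<le> D_h z y"
    unfolding D_h_pos_eq[OF zpos] by (rule member_le_sum) (auto intro: entropy_term_nonneg zpos y)
  finally have "t - 1 - ln t \<le> D_h z y / z$i" using zpos by (simp add: mult.commute pos_le_divide_eq)
  also have "\<dots> \<le> D_h z y / vmin z"
    using D0 vmin_le_nth[of z i] z by (intro divide_left_mono) auto
  also have "\<dots> \<le> c / vmin z"
    using c z by (intro divide_right_mono) auto
  finally have "- lambertW0 (- exp (-1 - c / vmin z)) \<le> t"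
    using minus_lambertW0_le t0 D0 c z by (simp add: divide_nonneg_pos)
  then have "entropy_floor z c \<le> vmin z * t"
    unfolding entropy_floor_def using z by (intro mult_left_mono) auto
  also have "\<dots> \<le> z$i * t" using vmin_le_nth[of z i] t0 by (intro mult_right_mono) auto
  also have "\<dots> = y$i" unfolding t_def using zpos[of i] by simp
  finally show ?thesis .
qed

section \<open>One step of entropic mirror descent\<close>

lemma lsq_f_nonneg: "0 \<le> lsq_f A b x"
  by (simp add: lsq_f_def)

lemma polyak_step_nonneg:
  assumes "\<And>i. 0 \<le> x$i"
  shows "0 \<le> polyak_step A b x"
  unfolding polyak_step_def
  using lsq_f_nonneg[of A b x] local_norm_sq_nonneg[OF assms, of "lsq_grad A b x"]
    inf_norm_nonneg[of "lsq_grad A b x"]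
  by simp

lemma norm_mult_vec_diff_eq:
  "A *v z = b \<Longrightarrow> (norm (A *v (x - z)))\<^sup>2 = 2 * lsq_f A b x"
  by (simp add: lsq_f_def matrix_vector_mult_diff_distrib)

lemma inner_lsq_grad_diff:
  assumes "A *v z = b"
  shows "lsq_grad A b x \<bullet> (x - z) = 2 * lsq_f A b x"
proof -
  have "lsq_grad A b x \<bullet> (x - z) = (A *v x - b) \<bullet> (A *v (x - z))"
    unfolding lsq_grad_def by (rule inner_transpose_mult_vec)
  also have "A *v (x - z) = A *v x - b" using assms by (simp add: matrix_vector_mult_diff_distrib)
  finally show ?thesis by (simp add: lsq_f_def power2_norm_eq_inner)
qed

lemma polyak_step_mult_local_norm_le:
  assumes "\<And>i. 0 \<le> x$i"
  shows "polyak_step A b x * local_norm_sq x (lsq_grad A b x) \<le> lsq_f A b x"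
proof -
  let ?L = "local_norm_sq x (lsq_grad A b x)"
  have "polyak_step A b x * ?L \<le> lsq_f A b x / ?L * ?L"
    using local_norm_sq_nonneg[OF assms] unfolding polyak_step_def by (intro mult_right_mono) auto
  then show ?thesis using lsq_f_nonneg by (cases "?L = 0") auto
qed

lemma polyak_step_mult_abs_grad_le:
  assumes "\<And>i. 0 \<le> x$i"
  shows "polyak_step A b x * \<bar>lsq_grad A b x $ i\<bar> \<le> 179/100"
proof -
  let ?I = "inf_norm (lsq_grad A b x)"
  have "polyak_step A b x * \<bar>lsq_grad A b x $ i\<bar> \<le> (179/100) / ?I * ?I"
    using polyak_step_nonneg[OF assms] abs_nth_le_inf_norm inf_norm_nonneg
    unfolding polyak_step_def by (intro mult_mono) auto
  then show ?thesis using abs_nth_le_inf_norm[of "lsq_grad A b x" i] by (cases "?I = 0") auto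
qed

lemma D_h_mult_exp_update:
  assumes z: "\<And>i. 0 < z$i" and x: "\<And>i. 0 < x$i"
  shows "D_h z (\<chi> i. x$i * exp (- v$i))
       = D_h z x - v \<bullet> (x - z) + (\<Sum>i\<in>UNIV. x$i * (exp (- v$i) - 1 + v$i))"
proof -
  have "z$i * ln (z$i / (x$i * exp (- v$i))) - z$i + x$i * exp (- v$i)
      = (z$i * ln (z$i / x$i) - z$i + x$i) - v$i * (x$i - z$i) + x$i * (exp (- v$i) - 1 + v$i)" for i
    using z[of i] x[of i] by (simp add: ln_div ln_mult algebra_simps)
  then have "D_h z (\<chi> i. x$i * exp (- v$i)) = (\<Sum>i\<in>UNIV.
      (z$i * ln (z$i / x$i) - z$i + x$i) - v$i * (x$i - z$i) + x$i * (exp (- v$i) - 1 + v$i))"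
    unfolding D_h_pos_eq[OF z] vec_lambda_beta by (rule sum.cong[OF refl])
  also have "\<dots> = D_h z x - v \<bullet> (x - z) + (\<Sum>i\<in>UNIV. x$i * (exp (- v$i) - 1 + v$i))"
    unfolding D_h_pos_eq[OF z] inner_vec_def inner_real_def vector_minus_component
    by (simp only: sum.distrib sum_subtractf)
  finally show ?thesis .
qed

lemma D_h_emd_update_le:
  assumes Az: "A *v z = b" and z: "\<And>i. 0 < z$i" and x: "\<And>i. 0 < x$i"
  shows "D_h z (emd_update A b x) \<le> D_h z x - polyak_step A b x * lsq_f A b x"
proof -
  define \<alpha> g f where "\<alpha> = polyak_step A b x" and "g = lsq_grad A b x" and "f = lsq_f A b x"
  have x0: "\<And>i. 0 \<le> x$i" using x less_imp_le by blast
  have "D_h z (emd_update A b x)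
      = D_h z x - 2 * \<alpha> * f + (\<Sum>i\<in>UNIV. x$i * (exp (- (\<alpha> * g$i)) - 1 + \<alpha> * g$i))"
    using D_h_mult_exp_update[OF z x, of "\<alpha> *s g"] inner_lsq_grad_diff[OF Az, of x]
    by (simp add: emd_update_def \<alpha>_def g_def f_def scalar_mult_eq_scaleR)
  also have "(\<Sum>i\<in>UNIV. x$i * (exp (- (\<alpha> * g$i)) - 1 + \<alpha> * g$i)) \<le> (\<Sum>i\<in>UNIV. x$i * (\<alpha> * g$i)\<^sup>2)"
  proof (intro sum_mono mult_left_mono x0 exp_minus_sub_le_square)
    fix i
    have "\<bar>\<alpha> * g$i\<bar> \<le> 179/100"
      using polyak_step_mult_abs_grad_le[OF x0, of A b i] polyak_step_nonneg[OF x0, of A b]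
      unfolding \<alpha>_def g_def by (simp add: abs_mult)
    then show "- (179/100) \<le> \<alpha> * g$i" by arith
  qed
  also have "\<dots> = \<alpha> * (\<alpha> * local_norm_sq x g)"
    by (simp add: local_norm_sq_def sum_distrib_left power2_eq_square mult_ac)
  also have "\<dots> \<le> \<alpha> * f"
    using polyak_step_mult_local_norm_le[OF x0] polyak_step_nonneg[OF x0]
    unfolding \<alpha>_def g_def f_def by (intro mult_left_mono)
  finally show ?thesis unfolding \<alpha>_def f_def by (simp add: algebra_simps)
qed

text \<open>A Polyak-Lojasiewicz type inequality for \<open>D\<^sub>h\<close>: \<open>D_h z y\<close> is dominated by
  \<open>\<langle>ln z - ln y, z - y\<rangle>\<close>, whose square the spectral gap controls.\<close>

lemma lambda_min_pos_mult_D_h_le: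
  fixes A :: "real^'n^'m"
  assumes A: "A \<noteq> 0" and z: "\<And>i. 0 < z$i" and y: "\<And>i. 0 < y$i"
    and u: "(\<chi> i. ln (z$i) - ln (y$i)) \<in> (null_space A)\<^sup>\<bottom>"
    and m: "0 < m" "\<And>i. m \<le> z$i" "\<And>i. m \<le> y$i"
  shows "lambda_min_pos A * m * D_h z y \<le> (norm (A *v (z - y)))\<^sup>2"
proof -
  define u where "u = (\<chi> i. ln (z$i) - ln (y$i))"
  define S where "S = u \<bullet> (z - y)"
  define N where "N = (norm (A *v (z - y)))\<^sup>2"
  have DS: "D_h z y \<le> S" unfolding S_def u_def using D_h_le_inner_ln_diff z y .
  have D0: "0 \<le> D_h z y" using D_h_nonneg z y .
  have lam: "0 < lambda_min_pos A" using lambda_min_pos_pos[OF A] .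
  have "u \<bullet> u \<le> (\<Sum>i\<in>UNIV. (ln (z$i) - ln (y$i)) * (z$i - y$i) / m)"
    unfolding u_def inner_vec_def
    by (auto simp flip: power2_eq_square intro!: sum_mono ln_diff_square_le m)
  then have "m * (u \<bullet> u) \<le> m * (S / m)"
    using m(1) by (simp add: S_def u_def inner_vec_def sum_divide_distrib)
  then have uu: "m * (u \<bullet> u) \<le> S" using m(1) by simp
  have "lambda_min_pos A * m * S\<^sup>2 = m * (lambda_min_pos A * S\<^sup>2)" by simp
  also have "\<dots> \<le> m * ((u \<bullet> u) * N)"
    using lambda_min_pos_mult_inner_square_le[OF A u, of "z - y"] m(1)
    unfolding u_def[symmetric] S_def[symmetric] N_def[symmetric] by (intro mult_left_mono) auto
  also have "\<dots> = (m * (u \<bullet> u)) * N" by simp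
  also have "\<dots> \<le> S * N" using uu by (intro mult_right_mono) (auto simp: N_def)
  finally have "S * (lambda_min_pos A * m * S) \<le> S * N" by (simp add: power2_eq_square algebra_simps)
  then have "S = 0 \<or> lambda_min_pos A * m * S \<le> N"
    using DS D0 by (auto simp: mult_le_cancel_left)
  moreover have "lambda_min_pos A * m * D_h z y \<le> lambda_min_pos A * m * S"
    using DS lam m by (intro mult_left_mono) auto
  ultimately show ?thesis using DS D0 unfolding N_def by fastforce
qed

lemma inf_norm_lsq_grad_le:
  "inf_norm (lsq_grad A b x) \<le> sqrt (max_col_sq A) * norm (A *v x - b)"
proof -
  obtain k where "inf_norm (lsq_grad A b x) = \<bar>lsq_grad A b x $ k\<bar>"
    using inf_norm_attained by blast
  then show ?thesis unfolding lsq_grad_def using abs_transpose_mult_vec_le by metis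
qed

lemma one_norm_diff_le:
  assumes "\<And>i. 0 \<le> x$i"
  shows "one_norm (x - z) \<le> (\<Sum>i\<in>UNIV. x$i) + one_norm z"
proof -
  have "\<bar>x$i - z$i\<bar> \<le> x$i + \<bar>z$i\<bar>" for i
    using abs_triangle_ineq4[of "x$i" "z$i"] assms[of i] by simp
  then show ?thesis unfolding one_norm_def sum.distrib[symmetric] by (simp add: sum_mono)
qed

lemma polyak_step_lower_bound:
  fixes A :: "real^'n^'m"
  assumes A: "A \<noteq> 0" and Az: "A *v z = b" and x: "\<And>i. 0 < x$i" and f: "0 < lsq_f A b x"
  defines "s \<equiv> \<Sum>i\<in>UNIV. x$i" and "M \<equiv> max_col_sq A"
  shows "min (1 / (2 * M * s)) ((179/100) / (M * (s + one_norm z))) \<le> polyak_step A b x"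
proof -
  define g I L where "g = lsq_grad A b x" and "I = inf_norm g" and "L = local_norm_sq x g"
  have x0: "\<And>i. 0 \<le> x$i" using x less_imp_le by blast
  have M: "0 < M" unfolding M_def using max_col_sq_pos[OF A] .
  have s: "0 < s" unfolding s_def using x by (intro sum_pos) auto
  have "g \<noteq> 0" using inner_lsq_grad_diff[OF Az, of x] f by (auto simp: g_def)
  then obtain j where j: "g$j \<noteq> 0" by (auto simp: vec_eq_iff)
  have I: "0 < I" unfolding I_def using abs_nth_le_inf_norm[of g j] j by linarith
  have Ir: "I \<le> sqrt M * norm (A *v x - b)"
    unfolding I_def g_def M_def by (rule inf_norm_lsq_grad_le)
  have "sqrt M * one_norm (x - z) \<le> sqrt M * (s + one_norm z)"
    using one_norm_diff_le[OF x0, of z] M unfolding s_def by (intro mult_left_mono) auto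
  then have "norm (A *v x - b) \<le> sqrt M * (s + one_norm z)"
    using norm_mult_vec_le[of A "x - z"] Az unfolding M_def
    by (simp add: matrix_vector_mult_diff_distrib)
  then have "I \<le> sqrt M * (sqrt M * (s + one_norm z))"
    using M by (intro order_trans[OF Ir] mult_left_mono) auto
  also have "\<dots> = M * (s + one_norm z)" using M by (simp add: mult.assoc[symmetric])
  finally have I_bound: "(179/100) / (M * (s + one_norm z)) \<le> (179/100) / I"
    using I by (intro divide_left_mono) auto
  have "I\<^sup>2 \<le> (sqrt M * norm (A *v x - b))\<^sup>2"
    using Ir I by (intro power_mono) auto
  then have "I\<^sup>2 \<le> M * (2 * lsq_f A b x)" using M by (simp add: lsq_f_def power_mult_distrib)
  then have "s * I\<^sup>2 \<le> s * (M * (2 * lsq_f A b x))" using s by simp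
  then have L_le: "L \<le> s * (M * (2 * lsq_f A b x))"
    using local_norm_sq_le[OF x0, of g] unfolding L_def s_def I_def by linarith
  have "0 < x$j * (g$j)\<^sup>2" using x j by simp
  also have "\<dots> \<le> L"
    unfolding L_def local_norm_sq_def by (rule member_le_sum) (simp_all add: x0)
  finally have "lsq_f A b x / (s * (M * (2 * lsq_f A b x))) \<le> lsq_f A b x / L"
    using L_le f M s by (intro divide_left_mono) auto
  then have L_bound: "1 / (2 * M * s) \<le> lsq_f A b x / L"
    using f by (simp add: mult.commute mult.left_commute)
  show ?thesis
    using min.mono[OF L_bound I_bound] unfolding polyak_step_def g_def[symmetric] I_def[symmetric]
      L_def[symmetric] .
qed

text \<open>Since \<open>\<Sum>\<^sub>i x\<^sub>i \<le> 2 (\<parallel>z\<parallel>\<^sub>1 + c)\<close>, both branches of the minimum in the previous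
  bound are at least \<open>1 / (4 M (\<parallel>z\<parallel>\<^sub>1 + c))\<close>; the second one with room to spare.\<close>

lemma polyak_step_ge_of_D_h_le:
  fixes A :: "real^'n^'m"
  assumes A: "A \<noteq> 0" and Az: "A *v z = b" and z: "\<And>i. 0 < z$i" and x: "\<And>i. 0 < x$i"
    and f: "0 < lsq_f A b x" and c: "D_h z x \<le> c"
  shows "1 / (4 * max_col_sq A * (one_norm z + c)) \<le> polyak_step A b x"
proof -
  define s M Q where "s = (\<Sum>i\<in>UNIV. x$i)" and "M = max_col_sq A" and "Q = M * (one_norm z + c)"
  have M: "0 < M" unfolding M_def using max_col_sq_pos[OF A] .
  have Z: "0 < one_norm z" using one_norm_pos z .
  have c0: "0 \<le> c" using D_h_nonneg[OF z x] c by linarith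
  have Q: "0 < Q" unfolding Q_def using M Z c0 by simp
  have s: "0 < s" "s \<le> 2 * (one_norm z + c)"
    using sum_le_D_h[OF z x] c x unfolding s_def by (auto intro: sum_pos)
  have "M * s \<le> M * (2 * (one_norm z + c))"
    using s M by (intro mult_left_mono) auto
  then have "2 * M * s \<le> 4 * Q" unfolding Q_def by (simp add: algebra_simps)
  then have "1 / (4 * Q) \<le> 1 / (2 * M * s)"
    using s M Q by (intro divide_left_mono) auto
  moreover have "M * (s + one_norm z) \<le> M * (3 * (one_norm z + c))"
    using s c0 M by (intro mult_left_mono) auto
  then have "(179/100) / (3 * Q) \<le> (179/100) / (M * (s + one_norm z))"
    using s M Z unfolding Q_def by (intro divide_left_mono) (auto simp: add_pos_pos)
  moreover have "1 / (4 * Q) \<le> (179/100) / (3 * Q)" using Q by (simp add: divide_simps)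
  ultimately have "1 / (4 * Q) \<le> min (1 / (2 * M * s)) ((179/100) / (M * (s + one_norm z)))"
    by simp
  also have "\<dots> \<le> polyak_step A b x"
    using polyak_step_lower_bound[OF A Az x f] unfolding s_def M_def .
  finally show ?thesis unfolding Q_def M_def by (simp add: mult.assoc)
qed

lemma rate_eq:
  "rate A z c = 1 - lambda_min_pos A * entropy_floor z c / (8 * max_col_sq A * (one_norm z + c))"
  by (simp add: rate_def entropy_floor_def)

lemma D_h_emd_update_le_rate:
  fixes A :: "real^'n^'m"
  assumes A: "A \<noteq> 0" and Az: "A *v z = b" and z: "0 < vmin z" and x: "\<And>i. 0 < x$i"
    and u: "(\<chi> i. ln (z$i) - ln (x$i)) \<in> (null_space A)\<^sup>\<bottom>" and c: "D_h z x \<le> c"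
  shows "D_h z (emd_update A b x) \<le> D_h z x * rate A z c"
proof -
  define D \<alpha> f m K where "D = D_h z x" and "\<alpha> = polyak_step A b x" and "f = lsq_f A b x"
    and "m = entropy_floor z c" and "K = 8 * max_col_sq A * (one_norm z + c)"
  have zpos: "\<And>i. 0 < z$i" using z by (rule vmin_pos_imp_pos)
  have D0: "0 \<le> D" unfolding D_def using D_h_nonneg zpos x .
  have c0: "0 \<le> c" using D0 c unfolding D_def by linarith
  have m: "0 < m" "\<And>i. m \<le> z$i" "\<And>i. m \<le> x$i"
    using entropy_floor_pos_le_vmin[OF z c0] vmin_le_nth[of z] entropy_floor_le_nth[OF z x c]
    unfolding m_def by (auto intro: order_trans)
  have K: "0 < K" unfolding K_def using max_col_sq_pos[OF A] one_norm_pos[OF zpos] c0 by simp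
  have lam_m: "0 < lambda_min_pos A * m" using lambda_min_pos_pos[OF A] m(1) by simp
  have PL: "lambda_min_pos A * m * D \<le> 2 * f"
    using lambda_min_pos_mult_D_h_le[OF A zpos x u m] norm_mult_vec_diff_eq[OF Az, of x]
    unfolding D_def f_def by (simp add: matrix_vector_mult_diff_distrib norm_minus_commute)
  have "D * (lambda_min_pos A * m) / K \<le> \<alpha> * f"
  proof (cases "f = 0")
    case True
    then have "lambda_min_pos A * m * D \<le> lambda_min_pos A * m * 0" using PL by simp
    then have "D = 0" using mult_le_cancel_left_pos[OF lam_m, of D 0] D0 by linarith
    then show ?thesis using polyak_step_nonneg[of x A b] x lsq_f_nonneg[of A b x]
      unfolding \<alpha>_def f_def by (simp add: less_imp_le)
  next
    case False
    then have f: "0 < f" using lsq_f_nonneg unfolding f_def by (simp add: order_less_le)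
    then have "2 / K \<le> \<alpha>"
      using polyak_step_ge_of_D_h_le[OF A Az zpos x _ c] unfolding \<alpha>_def f_def K_def by simp
    then have "2 * f / K \<le> \<alpha> * f" using mult_right_mono[of "2 / K" \<alpha> f] f by simp
    moreover have "D * (lambda_min_pos A * m) / K \<le> 2 * f / K"
      using PL K by (intro divide_right_mono) (auto simp: mult.commute mult.left_commute)
    ultimately show ?thesis by linarith
  qed
  moreover have "D * rate A z c = D - D * (lambda_min_pos A * m) / K"
    unfolding rate_eq m_def[symmetric] K_def by (simp add: right_diff_distrib)
  ultimately show ?thesis using D_h_emd_update_le[OF Az zpos x] unfolding D_def \<alpha>_def f_def by linarith
qed
section \<open>The trajectory\<close>

lemma has_real_derivative_D_h_line:
  assumes z: "\<And>i. 0 < z$i" and y: "\<And>i. 0 < y$i"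
  shows "((\<lambda>e. \<Sum>i\<in>UNIV. (z$i + e * q$i) * ln ((z$i + e * q$i) / y$i) - (z$i + e * q$i) + y$i)
      has_real_derivative (\<Sum>i\<in>UNIV. q$i * ln (z$i / y$i))) (at 0)"
proof (rule DERIV_sum)
  fix i
  have "z$i \<noteq> 0" "y$i \<noteq> 0" using z[of i] y[of i] by auto
  then show "((\<lambda>e. (z$i + e * q$i) * ln ((z$i + e * q$i) / y$i) - (z$i + e * q$i) + y$i)
      has_real_derivative q$i * ln (z$i / y$i)) (at 0)"
    using z[of i] y[of i] by (auto intro!: derivative_eq_intros simp: field_simps)
qed

text \<open>For \<open>q \<in> ker A\<close> the points \<open>z + e q\<close> stay feasible for small \<open>|e|\<close>, so the derivative
  \<open>\<Sum>\<^sub>i q\<^sub>i ln (z\<^sub>i / x0\<^sub>i)\<close> of \<open>e \<mapsto> D_h (z + e q) x0\<close> at \<open>0\<close> vanishes.\<close>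

lemma bregman_projection_ln_diff_orthogonal:
  fixes A :: "real^'n^'m"
  assumes x0: "\<And>i. 0 < x0$i" and z: "0 < vmin z" and zS: "z \<in> S_plus A b"
    and zmin: "\<forall>y\<in>S_plus A b. D_h z x0 \<le> D_h y x0"
  shows "(\<chi> i. ln (z$i) - ln (x0$i)) \<in> (null_space A)\<^sup>\<bottom>"
  unfolding mem_orthogonal_comp_null_space
proof (intro allI impI)
  fix q assume Aq: "A *v q = 0"
  have zpos: "\<And>i. 0 < z$i" using z by (rule vmin_pos_imp_pos)
  define B where "B = one_norm q + 1"
  have "0 \<le> one_norm q" unfolding one_norm_def by (simp add: sum_nonneg)
  then have B: "0 < B" unfolding B_def by simp
  have qB: "\<bar>q$i\<bar> \<le> B" for i
    using member_le_sum[of i UNIV "\<lambda>i. \<bar>q$i\<bar>"] unfolding B_def one_norm_def by simp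
  define \<delta> where "\<delta> = vmin z / B"
  have \<delta>: "0 < \<delta>" unfolding \<delta>_def using z B by simp
  define \<psi> where "\<psi> e = (\<Sum>i\<in>UNIV. (z$i + e * q$i) * ln ((z$i + e * q$i) / x0$i) - (z$i + e * q$i) + x0$i)"
    for e
  have "\<psi> 0 \<le> \<psi> e" if "\<bar>0 - e\<bar> < \<delta>" for e
  proof -
    have pos: "0 < (z + e *\<^sub>R q)$i" for i
    proof -
      have "\<bar>e * q$i\<bar> \<le> \<bar>e\<bar> * B" using qB[of i] by (simp add: abs_mult mult_left_mono)
      also have "\<dots> < \<delta> * B" using that B by (intro mult_strict_right_mono) auto
      finally have "\<bar>e * q$i\<bar> < vmin z" unfolding \<delta>_def using B by simp
      then show ?thesis using vmin_le_nth[of z i] by (auto simp: abs_less_iff)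
    qed
    then have "z + e *\<^sub>R q \<in> S_plus A b"
      using zS Aq by (auto simp: S_plus_def less_imp_le matrix_vector_right_distrib matrix_vector_mult_scaleR)
    then have "D_h z x0 \<le> D_h (z + e *\<^sub>R q) x0" using zmin by blast
    then show ?thesis by (simp add: \<psi>_def D_h_pos_eq[OF pos] D_h_pos_eq[OF zpos])
  qed
  moreover have "DERIV \<psi> 0 :> (\<Sum>i\<in>UNIV. q$i * ln (z$i / x0$i))"
    unfolding \<psi>_def[abs_def] using zpos x0 by (rule has_real_derivative_D_h_line)
  ultimately have "(\<Sum>i\<in>UNIV. q$i * ln (z$i / x0$i)) = 0"
    using DERIV_local_min \<delta> by blast
  moreover have "ln (z$i / x0$i) = ln (z$i) - ln (x0$i)" for i
    using zpos[of i] x0[of i] by (simp add: ln_div)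
  ultimately show "(\<chi> i. ln (z$i) - ln (x0$i)) \<bullet> q = 0"
    unfolding inner_vec_def inner_real_def by (simp add: mult.commute)
qed

lemma emd_update_pos: "(\<And>i. 0 < x$i) \<Longrightarrow> 0 < emd_update A b x $ i"
  by (simp add: emd_update_def)

lemma ln_diff_emd_update:
  assumes "\<And>i. 0 < x$i"
  shows "(\<chi> i. ln (z$i) - ln (emd_update A b x $ i))
       = (\<chi> i. ln (z$i) - ln (x$i)) + polyak_step A b x *\<^sub>R lsq_grad A b x"
proof -
  have "ln (emd_update A b x $ i) = ln (x$i) - polyak_step A b x * lsq_grad A b x $ i" for i
    using assms[of i] by (simp add: emd_update_def ln_mult)
  then show ?thesis by (simp add: vec_eq_iff)
qed

lemma rate_tendsto:
  fixes A :: "real^'n^'m"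
  assumes A: "A \<noteq> 0" and z: "0 < vmin z" and d: "d \<longlonglongrightarrow> 0" "\<And>k. 0 \<le> d k"
  shows "(\<lambda>k. rate A z (d k)) \<longlonglongrightarrow> 1 - lambda_min_pos A * vmin z / (8 * max_col_sq A * one_norm z)"
proof -
  have "(\<lambda>k. - exp (-1 - d k / vmin z)) \<longlonglongrightarrow> - exp (-1 - 0 / vmin z)"
    by (intro tendsto_intros d) (use z in auto)
  then have "(\<lambda>k. lambertW0 (- exp (-1 - d k / vmin z))) \<longlonglongrightarrow> -1"
    using d(2) z by (intro lambertW0_tendsto_minus_one) (auto simp: divide_nonneg_pos)
  then have "(\<lambda>k. rate A z (d k)) \<longlonglongrightarrow>
      1 - (- lambda_min_pos A * vmin z * -1) / (8 * max_col_sq A * (one_norm z + 0))"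
    unfolding rate_def using max_col_sq_pos[OF A] one_norm_pos[OF vmin_pos_imp_pos[OF z]]
    by (intro tendsto_intros d) auto
  then show ?thesis by simp
qed

lemma emd_iterates_pos:
  assumes "\<And>i. 0 < x 0 $ i" and "\<And>k. x (Suc k) = emd_update A b (x k)"
  shows "0 < x k $ i"
proof (induction k arbitrary: i)
  case (Suc k)
  show ?case using assms(2) emd_update_pos[OF Suc.IH] by simp
qed (rule assms(1))

lemma emd_iterates_ln_diff_orthogonal:
  assumes "\<And>i. 0 < x 0 $ i" and x: "\<And>k. x (Suc k) = emd_update A b (x k)"
    and "(\<chi> i. ln (z$i) - ln (x 0 $ i)) \<in> (null_space A)\<^sup>\<bottom>"
  shows "(\<chi> i. ln (z$i) - ln (x k $ i)) \<in> (null_space A)\<^sup>\<bottom>"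
proof (induction k)
  case (Suc k)
  have "lsq_grad A b (x k) \<in> (null_space A)\<^sup>\<bottom>"
    unfolding lsq_grad_def by (rule transpose_mult_vec_in_orthogonal_comp)
  then have "polyak_step A b (x k) *\<^sub>R lsq_grad A b (x k) \<in> (null_space A)\<^sup>\<bottom>"
    by (rule subspace_scale[OF subspace_orthogonal_comp])
  moreover have "(\<chi> i. ln (z$i) - ln (x (Suc k) $ i))
      = (\<chi> i. ln (z$i) - ln (x k $ i)) + polyak_step A b (x k) *\<^sub>R lsq_grad A b (x k)"
    using x ln_diff_emd_update[OF emd_iterates_pos[OF assms(1) x]] by simp
  ultimately show ?case using Suc.IH by (simp add: subspace_add[OF subspace_orthogonal_comp])
qed (rule assms(3))

lemma emd_iterates_D_h_le_initial:
  assumes Az: "A *v z = b" and z: "\<And>i. 0 < z$i"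
    and x0: "\<And>i. 0 < x 0 $ i" and x: "\<And>k. x (Suc k) = emd_update A b (x k)"
  shows "D_h z (x k) \<le> D_h z (x 0)"
proof (induction k)
  case (Suc k)
  have pos: "\<And>i. 0 < x k $ i" using emd_iterates_pos x0 x by blast
  then have "0 \<le> polyak_step A b (x k) * lsq_f A b (x k)"
    using polyak_step_nonneg[of "x k" A b] lsq_f_nonneg[of A b "x k"] by (simp add: less_imp_le)
  moreover have "D_h z (x (Suc k)) \<le> D_h z (x k) - polyak_step A b (x k) * lsq_f A b (x k)"
    using D_h_emd_update_le[OF Az z pos] x by simp
  ultimately show ?case using Suc by linarith
qed simp

theorem theorem3p8:
  fixes A :: "real^'n^'m" and b :: "real^'m" and x0 z :: "real^'n" and x :: "nat \<Rightarrow> real^'n"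
  assumes "A \<noteq> 0"
    and "S_plus A b \<noteq> {}"
    and "\<forall>i. 0 < x0$i"
    and "x 0 = x0"
    and "\<forall>k. x (Suc k) = emd_update A b (x k)"
    and "z \<in> S_plus A b" and "\<forall>y\<in>S_plus A b. D_h z x0 \<le> D_h y x0"
    and "x \<longlonglongrightarrow> z"
    and "vmin z > 0"
  shows "(\<forall>k. D_h z (x (Suc k)) \<le> D_h z (x k) * rate A z (D_h z (x k)))
       \<and> (\<forall>k. D_h z (x (Suc k)) \<le> D_h z (x k) * rate A z (D_h z x0))
       \<and> (\<lambda>k. rate A z (D_h z (x k))) \<longlonglongrightarrow>
            1 - lambda_min_pos A * vmin z / (8 * max_col_sq A * one_norm z)"
proof -
  note A = assms(1) and z = assms(9)
  have zpos: "\<And>i. 0 < z$i" using z by (rule vmin_pos_imp_pos)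
  have Az: "A *v z = b" using assms(6) by (simp add: S_plus_def)
  have x0: "\<And>i. 0 < x 0 $ i" and x: "\<And>k. x (Suc k) = emd_update A b (x k)"
    using assms(3-5) by auto
  have pos: "\<And>i. 0 < x k $ i" for k using emd_iterates_pos x0 x by blast
  have "(\<chi> i. ln (z$i) - ln (x 0 $ i)) \<in> (null_space A)\<^sup>\<bottom>"
    using bregman_projection_ln_diff_orthogonal[of x0 z A b] assms(3,4,6,7) z by simp
  then have orth: "(\<chi> i. ln (z$i) - ln (x k $ i)) \<in> (null_space A)\<^sup>\<bottom>" for k
    using emd_iterates_ln_diff_orthogonal[OF x0 x] by blast
  have step: "D_h z (x (Suc k)) \<le> D_h z (x k) * rate A z c" if "D_h z (x k) \<le> c" for k c
    using D_h_emd_update_le_rate[OF A Az z pos orth that] x by simp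
  have "D_h z (x k) \<le> D_h z x0" for k
    using emd_iterates_D_h_le_initial[OF Az zpos x0 x] assms(4) by simp
  then show ?thesis
    using step[OF order_refl] step rate_tendsto[OF A z D_h_tendsto_0[OF zpos assms(8)] D_h_nonneg[OF zpos pos]]
    by blast
qed

end
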